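(* Let $\gamma>0$, $\lambda>0$ and $\omega\in[-\pi,\pi]$, and let $f$ be the $\mathrm{GCPC}(\omega,\gamma,\lambda)$ density on the circle. - (i) If $\lambda=1$, then $f$ is unimodal. - (A) If $1<\lambda\le\gamma^2+1$, then $f$ is unimodal. - (B) If $\lambda>\gamma^2+1$, then $f$ is unimodal when $(\gamma^2+1)(\lambda-1)>(\lambda-\gamma^2-1)(2\lambda-1)^2$. - (C) If $\tfrac12<\lambda<1$, then $f$ is unimodal when $(\gamma^2+1-\lambda)(1-2\lambda)^2>(\gamma^2+1)(1-\lambda)$. - (D) If $\lambda\le\tfrac12$, then $f$ is never unimodal (it has more than one local maximum).
   Context: For $\lambda>0$, $\gamma\ge0$ and $\omega\in[-\pi,\pi]$, the distribution $\mathrm{GCPC}(\omega,\gamma,\lambda)$ is the distribution on the circle with density $$f(\theta)=\frac{1}{2\pi\sqrt{\lambda}\,\bigl(b\sqrt{\gamma^2+1}-\gamma\cos\phi\,\sqrt{b}\bigr)},\qquad \phi=\theta-\omega,\quad b=\cos^2\phi+\frac{\sin^2\phi}{\lambda}.$$ A density on the circle is called unimodal if it has exactly one local maximum on the circle. The density is viewed as a $2\pi$-periodic function of $\theta$. *)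

theory Defs
  imports "HOL-Analysis.Analysis"
begin

definition gcpc_density :: "real \<Rightarrow> real \<Rightarrow> real \<Rightarrow> real \<Rightarrow> real" where
  "gcpc_density \<omega> \<gamma> lam \<theta> =
     (let \<phi> = \<theta> - \<omega>;
          b = (cos \<phi>)\<^sup>2 + (sin \<phi>)\<^sup>2 / lam
      in 1 / (2 * pi * sqrt lam * (b * sqrt (\<gamma>\<^sup>2 + 1) - \<gamma> * cos \<phi> * sqrt b)))"

text \<open>Local maximum of a real function (on the real line; for a 2 pi-periodic
  function this is the same as a local maximum on the circle).\<close>
definition is_local_max :: "(real \<Rightarrow> real) \<Rightarrow> real \<Rightarrow> bool" where
  "is_local_max f x \<longleftrightarrow> (\<exists>e>0. \<forall>y. \<bar>y - x\<bar> < e \<longrightarrow> f y \<le> f x)"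

text \<open>A 2 pi-periodic function viewed on the circle: points of the circle are
  represented by their unique representative in [0, 2 pi).  Unimodal = exactly one
  local maximum on the circle.\<close>
definition circ_local_maxima :: "(real \<Rightarrow> real) \<Rightarrow> real set" where
  "circ_local_maxima f = {x \<in> {0..<2*pi}. is_local_max f x}"

definition unimodal_circ :: "(real \<Rightarrow> real) \<Rightarrow> bool" where
  "unimodal_circ f \<longleftrightarrow> (\<exists>!x. x \<in> circ_local_maxima f)"

end

theory Submission
  imports Defs
begin

(* Write c = cos (theta - omega).  The density is 1 / (2 pi sqrt lam H c) with
   H c = gcpc_denom gamma lam c = b sqrt (gamma^2 + 1) - gamma c sqrt b  and
   b = gcpc_b lam c = c^2 + (1 - c^2) / lam; moreover H > 0 on [-1, 1].
   If H is strictly decreasing on [-1, 1], the density is a strictly increasing function of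
   cos (theta - omega), whose only local maximum on the circle is theta = omega.  The sign of H'
   is that of 2 sqrt (gamma^2 + 1) (lam - 1) c sqrt b - gamma (1 + 2 (lam - 1) c^2); for lam > 1/2
   this is negative as soon as E = gamma^2 + 4 (lam - 1) (gamma^2 + 1 - lam) > 0, and each of the
   conditions (i), (A), (B), (C) implies E > 0.  For lam <= 1/2 we have b >= 2 - c^2, which gives
   H c >= H 1 everywhere and H c >= H (-1) for c <= 0, so theta = omega and theta = omega + pi
   are both local maxima. *)

lemma exists_cos_diff_eq_in_period:
  "\<exists>x\<in>{0..<2*pi}. cos (x - w) = cos a"
proof
  define k where "k = \<lfloor>(w + a) / (2*pi)\<rfloor>"
  define x where "x = w + a - 2*pi * of_int k"
  show "x \<in> {0..<2*pi}"
    using floor_divide_lower[of "2*pi" "w + a"] floor_divide_upper[of "2*pi" "w + a"]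
    by (auto simp: x_def k_def algebra_simps)
  show "cos (x - w) = cos a"
    by (simp add: x_def cos_diff)
qed

lemma cos_diff_eq_1_unique:
  assumes "x \<in> {0..<2*pi}" "y \<in> {0..<2*pi}" "cos (x - w) = 1" "cos (y - w) = 1"
  shows "x = y"
proof -
  obtain n :: int where n: "x - w = real_of_int n * 2 * pi" using assms(3) cos_one_2pi_int by blast
  obtain m :: int where m: "y - w = real_of_int m * 2 * pi" using assms(4) cos_one_2pi_int by blast
  have "\<bar>real_of_int (n - m) * (2 * pi)\<bar> < 2 * pi"
    using assms(1,2) n m by (auto simp: algebra_simps)
  then have "n = m" by (simp add: abs_mult)
  then show ?thesis using n m by simp
qed

lemma cos_diff_eq_1_if_is_local_max:
  assumes "is_local_max (\<lambda>\<theta>. cos (\<theta> - w)) x"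
  shows "cos (x - w) = 1"
proof -
  obtain e where e: "e > 0" and le: "\<And>y. \<bar>y - x\<bar> < e \<Longrightarrow> cos (y - w) \<le> cos (x - w)"
    using assms unfolding is_local_max_def by blast
  have deriv: "((\<lambda>y. cos (y - w)) has_real_derivative - sin (x - w)) (at x)"
    by (auto intro!: derivative_eq_intros)
  have max: "\<forall>y. \<bar>x - y\<bar> < e \<longrightarrow> cos (y - w) \<le> cos (x - w)"
    using le by (simp add: abs_minus_commute)
  have sin0: "sin (x - w) = 0"
    using DERIV_local_max[OF deriv e max] by simp
  define d where "d = min (e/2) 1"
  have d: "0 < d" "\<bar>(x + d) - x\<bar> < e" "d < pi" using e pi_gt3 by (auto simp: d_def)
  \<comment> \<open>Since sin vanishes at x, cos (x + d - w) = cos (x - w) * cos d with cos d < 1, so cos (x - w) \<ge> 0.\<close>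
  have "0 \<le> cos (x - w) * (1 - cos d)"
    using le[OF d(2)] cos_add[of "x - w" d] sin0 by (simp add: algebra_simps)
  moreover have "cos d < 1" using cos_monotone_0_pi[of 0 d] d by simp
  ultimately have "cos (x - w) \<ge> 0" by (simp add: zero_le_mult_iff)
  moreover have "(cos (x - w))\<^sup>2 = 1" using sin_cos_squared_add[of "x - w"] sin0 by simp
  ultimately show ?thesis by (simp add: power2_eq_1_iff)
qed

lemma is_local_max_comp_cos_diff_iff:
  assumes "strict_mono_on {-1..1} F"
  shows "is_local_max (\<lambda>\<theta>. F (cos (\<theta> - w))) x \<longleftrightarrow> cos (x - w) = 1"
proof
  have F_less_iff: "F (cos s) < F (cos t) \<longleftrightarrow> cos s < cos t" for s t
    using assms by (auto simp: strict_mono_on_less)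
  assume "is_local_max (\<lambda>\<theta>. F (cos (\<theta> - w))) x"
  then have "is_local_max (\<lambda>\<theta>. cos (\<theta> - w)) x"
    unfolding is_local_max_def by (meson F_less_iff not_le)
  then show "cos (x - w) = 1" by (rule cos_diff_eq_1_if_is_local_max)
next
  assume "cos (x - w) = 1"
  moreover have "F (cos t) \<le> F 1" for t
    using assms cos_le_one[of t] by (auto simp: strict_mono_on_leD)
  ultimately show "is_local_max (\<lambda>\<theta>. F (cos (\<theta> - w))) x"
    unfolding is_local_max_def by (auto intro: exI[of _ 1])
qed

lemma unimodal_circ_comp_cos_diff:
  assumes "strict_mono_on {-1..1} F"
  shows "unimodal_circ (\<lambda>\<theta>. F (cos (\<theta> - w)))"
proof -
  obtain x where "x \<in> {0..<2*pi}" "cos (x - w) = 1"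
    using exists_cos_diff_eq_in_period[of w 0] by auto
  then show ?thesis
    unfolding unimodal_circ_def circ_local_maxima_def is_local_max_comp_cos_diff_iff[OF assms]
    by (auto intro: cos_diff_eq_1_unique)
qed

lemma two_circ_local_maxima_comp_cos_diff:
  assumes max: "\<And>c. -1 \<le> c \<Longrightarrow> c \<le> 1 \<Longrightarrow> F c \<le> F 1"
    and max_neg: "\<And>c. -1 \<le> c \<Longrightarrow> c \<le> 0 \<Longrightarrow> F c \<le> F (-1)"
  shows "\<exists>x y. x \<in> circ_local_maxima (\<lambda>\<theta>. F (cos (\<theta> - w)))
           \<and> y \<in> circ_local_maxima (\<lambda>\<theta>. F (cos (\<theta> - w))) \<and> x \<noteq> y"
proof -
  obtain x where x: "x \<in> {0..<2*pi}" "cos (x - w) = 1"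
    using exists_cos_diff_eq_in_period[of w 0] by auto
  obtain y where y: "y \<in> {0..<2*pi}" "cos (y - w) = -1"
    using exists_cos_diff_eq_in_period[of w pi] by auto
  have "is_local_max (\<lambda>\<theta>. F (cos (\<theta> - w))) x"
    unfolding is_local_max_def using x max by (auto intro: exI[of _ 1])
  moreover have "is_local_max (\<lambda>\<theta>. F (cos (\<theta> - w))) y"
    unfolding is_local_max_def
  proof (intro exI[of _ "pi/2"] conjI allI impI)
    fix z assume z: "\<bar>z - y\<bar> < pi/2"
    have "sin (y - w) = 0" using y(2) sin_cos_squared_add[of "y - w"] by simp
    then have "cos (z - w) = - cos (z - y)"
      using cos_add[of "y - w" "z - y"] y(2) by simp
    moreover have "cos (z - y) > 0" using z unfolding abs_less_iff by (intro cos_gt_zero_pi) linarith+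
    ultimately show "F (cos (z - w)) \<le> F (cos (y - w))"
      using max_neg y(2) by simp
  qed simp
  moreover have "x \<noteq> y" using x y by auto
  ultimately show ?thesis unfolding circ_local_maxima_def using x y by blast
qed

definition gcpc_b :: "real \<Rightarrow> real \<Rightarrow> real" where
  "gcpc_b lam c = c\<^sup>2 + (1 - c\<^sup>2) / lam"

definition gcpc_denom :: "real \<Rightarrow> real \<Rightarrow> real \<Rightarrow> real" where
  "gcpc_denom \<gamma> lam c = gcpc_b lam c * sqrt (\<gamma>\<^sup>2 + 1) - \<gamma> * c * sqrt (gcpc_b lam c)"

lemma gcpc_density_eq_comp_cos:
  "gcpc_density w \<gamma> lam = (\<lambda>\<theta>. 1 / (2 * pi * sqrt lam * gcpc_denom \<gamma> lam (cos (\<theta> - w))))"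
  by (simp add: fun_eq_iff gcpc_density_def gcpc_denom_def gcpc_b_def sin_squared_eq Let_def)

lemma gcpc_b_ge_sq: "lam > 0 \<Longrightarrow> c\<^sup>2 \<le> 1 \<Longrightarrow> c\<^sup>2 \<le> gcpc_b lam c"
  by (simp add: gcpc_b_def)

lemma gcpc_b_pos: "lam > 0 \<Longrightarrow> c\<^sup>2 \<le> 1 \<Longrightarrow> 0 < gcpc_b lam c"
  by (cases "c\<^sup>2 = 1") (auto simp: gcpc_b_def intro: add_nonneg_pos)

lemma gcpc_denom_pos:
  assumes "lam > 0" "c\<^sup>2 \<le> 1"
  shows "0 < gcpc_denom \<gamma> lam c"
proof -
  define G where "G = sqrt (\<gamma>\<^sup>2 + 1)"
  define u where "u = sqrt (gcpc_b lam c)"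
  have u_pos: "u > 0" using gcpc_b_pos[OF assms] by (simp add: u_def)
  have u_ge: "\<bar>c\<bar> \<le> u" using gcpc_b_ge_sq[OF assms] real_sqrt_le_mono by (fastforce simp: u_def)
  have G_gt: "\<bar>\<gamma>\<bar> < G" using real_sqrt_less_mono[of "\<gamma>\<^sup>2" "\<gamma>\<^sup>2 + 1"] by (simp add: G_def)
  have "\<gamma> * c \<le> \<bar>\<gamma>\<bar> * u" using u_ge by (metis abs_ge_self abs_mult abs_ge_zero mult_left_mono order_trans)
  also have "\<dots> < G * u" using G_gt u_pos by simp
  finally have "0 < u * (G * u - \<gamma> * c)" using u_pos by simp
  also have "\<dots> = gcpc_denom \<gamma> lam c"
    using gcpc_b_pos[OF assms] by (simp add: gcpc_denom_def G_def u_def algebra_simps)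
  finally show ?thesis .
qed

lemma gcpc_denom_has_derivative:
  assumes "lam > 0" "c\<^sup>2 \<le> 1"
  defines "u \<equiv> sqrt (gcpc_b lam c)"
  shows "(gcpc_denom \<gamma> lam has_real_derivative
    (2 * sqrt (\<gamma>\<^sup>2 + 1) * (lam - 1) * c * u - \<gamma> * (1 + 2 * (lam - 1) * c\<^sup>2)) / (lam * u)) (at c)"
proof -
  define G where "G = sqrt (\<gamma>\<^sup>2 + 1)"
  define b' where "b' = 2 * (lam - 1) * c / lam"
  have b_pos: "gcpc_b lam c > 0" using gcpc_b_pos[OF assms(1,2)] .
  have b: "(gcpc_b lam has_real_derivative b') (at c)"
    unfolding gcpc_b_def b'_def using assms(1)
    by (auto intro!: derivative_eq_intros simp: field_simps)
  have u: "((\<lambda>x. sqrt (gcpc_b lam x)) has_real_derivative b' / (2 * u)) (at c)"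
    using DERIV_chain2[OF DERIV_real_sqrt[OF b_pos] b] by (simp add: u_def field_simps)
  have deriv: "(gcpc_denom \<gamma> lam has_real_derivative b' * G - (\<gamma> * 1 * u + b' / (2 * u) * (\<gamma> * c))) (at c)"
    unfolding gcpc_denom_def G_def[symmetric]
    using DERIV_diff[OF DERIV_cmult_right[OF b] DERIV_mult[OF DERIV_cmult[OF DERIV_ident] u]]
    by (simp add: u_def)
  have "u > 0" "lam * u\<^sup>2 = 1 + (lam - 1) * c\<^sup>2"
    using b_pos assms(1) by (simp_all add: u_def gcpc_b_def field_simps)
  then have "b' * G - (\<gamma> * 1 * u + b' / (2 * u) * (\<gamma> * c))
      = (2 * G * (lam - 1) * c * u - \<gamma> * (lam * u\<^sup>2 + (lam - 1) * c\<^sup>2)) / (lam * u)"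
    using assms(1) by (simp add: b'_def field_simps power2_eq_square)
  also have "\<dots> = (2 * G * (lam - 1) * c * u - \<gamma> * (1 + 2 * (lam - 1) * c\<^sup>2)) / (lam * u)"
    using \<open>lam * u\<^sup>2 = _\<close> by simp
  finally show ?thesis using deriv by (simp add: G_def)
qed

lemma gcpc_denom_deriv_numerator_neg:
  assumes \<gamma>: "\<gamma> > 0" and lam: "lam > 1/2" and E: "\<gamma>\<^sup>2 + 4 * (lam - 1) * (\<gamma>\<^sup>2 + 1 - lam) > 0"
    and c: "c\<^sup>2 < 1"
  shows "2 * sqrt (\<gamma>\<^sup>2 + 1) * (lam - 1) * c * sqrt (gcpc_b lam c) < \<gamma> * (1 + 2 * (lam - 1) * c\<^sup>2)"
    (is "?L < ?R")
proof (rule power2_less_imp_less)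
  define t where "t = c\<^sup>2"
  define s where "s = t * (1 + (lam - 1) * t)"
  have t: "0 \<le> t" "t < 1" using c by (auto simp: t_def)
  \<comment> \<open>Each factor below is a convex combination of its (nonnegative) values at t = 0 and t = 1.\<close>
  have "0 \<le> (1 - t) + t * lam" "0 \<le> (1 - t) * lam + t * (2 * lam - 1)" and R_pos: "0 < (1 - t) + t * (2 * lam - 1)"
    using t lam by (auto intro: add_nonneg_nonneg add_pos_nonneg)
  moreover have "s = t * ((1 - t) + t * lam)" "lam - s = (1 - t) * ((1 - t) * lam + t * (2 * lam - 1))"
    by (simp_all add: s_def algebra_simps power2_eq_square)
  ultimately have s: "0 \<le> s" "s \<le> lam"
    using t by (metis mult_nonneg_nonneg, smt (verit) mult_nonneg_nonneg)
  \<comment> \<open>lam (R^2 - L^2) is affine in s \<in> [0, lam], with value \<gamma>^2 lam at s = 0 and lam E at s = lam.\<close>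
  have "?L\<^sup>2 = 4 * (\<gamma>\<^sup>2 + 1) * (lam - 1)\<^sup>2 * t * gcpc_b lam c"
    using gcpc_b_pos[of lam c] lam c by (simp add: power_mult_distrib t_def)
  then have "lam * (?R\<^sup>2 - ?L\<^sup>2)
      = lam * \<gamma>\<^sup>2 * (1 + 2 * (lam - 1) * t)\<^sup>2 - 4 * (\<gamma>\<^sup>2 + 1) * (lam - 1)\<^sup>2 * t * (lam * gcpc_b lam c)"
    by (simp add: t_def power_mult_distrib right_diff_distrib mult_ac)
  also have "lam * gcpc_b lam c = 1 + (lam - 1) * t"
    using lam by (simp add: gcpc_b_def t_def field_simps)
  also have "lam * \<gamma>\<^sup>2 * (1 + 2 * (lam - 1) * t)\<^sup>2 - 4 * (\<gamma>\<^sup>2 + 1) * (lam - 1)\<^sup>2 * t * (1 + (lam - 1) * t)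
      = \<gamma>\<^sup>2 * (lam - s) + s * (\<gamma>\<^sup>2 + 4 * (lam - 1) * (\<gamma>\<^sup>2 + 1 - lam))"
    by (simp add: s_def algebra_simps power2_eq_square)
  also have "\<dots> > 0"
  proof (cases "s = lam")
    case True then show ?thesis using E lam by simp
  next
    case False then have "lam - s > 0" using s by simp
    then show ?thesis using \<gamma> E s by (intro add_pos_nonneg) auto
  qed
  finally show "?L\<^sup>2 < ?R\<^sup>2" using lam by (simp add: zero_less_mult_iff)
  have "0 < 1 + 2 * (lam - 1) * c\<^sup>2" using R_pos by (simp add: t_def algebra_simps)
  then show "0 \<le> ?R" using \<gamma> by simp
qed

lemma gcpc_denom_strict_decreasing:
  assumes "\<gamma> > 0" "lam > 1/2" "\<gamma>\<^sup>2 + 4 * (lam - 1) * (\<gamma>\<^sup>2 + 1 - lam) > 0"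
    and "-1 \<le> c1" "c1 < c2" "c2 \<le> 1"
  shows "gcpc_denom \<gamma> lam c2 < gcpc_denom \<gamma> lam c1"
proof (rule DERIV_neg_imp_decreasing_open[OF \<open>c1 < c2\<close>])
  fix c assume "c1 < c" "c < c2"
  then have c: "c\<^sup>2 < 1" using assms by (simp add: abs_square_less_1)
  have "lam > 0" "gcpc_b lam c > 0" using assms(2) gcpc_b_pos[of lam c] c by auto
  with gcpc_denom_deriv_numerator_neg[OF assms(1-3) c]
  have "(2 * sqrt (\<gamma>\<^sup>2 + 1) * (lam - 1) * c * sqrt (gcpc_b lam c) - \<gamma> * (1 + 2 * (lam - 1) * c\<^sup>2))
      / (lam * sqrt (gcpc_b lam c)) < 0"
    by (intro divide_neg_pos) auto
  then show "\<exists>y. (gcpc_denom \<gamma> lam has_real_derivative y) (at c) \<and> y < 0"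
    using gcpc_denom_has_derivative[of lam c \<gamma>] \<open>lam > 0\<close> c by auto
next
  show "continuous_on {c1..c2} (gcpc_denom \<gamma> lam)"
    unfolding gcpc_denom_def gcpc_b_def by (intro continuous_intros) (use assms(2) in auto)
qed

lemma unimodal_gcpc_density:
  assumes "\<gamma> > 0" "lam > 1/2" "\<gamma>\<^sup>2 + 4 * (lam - 1) * (\<gamma>\<^sup>2 + 1 - lam) > 0"
  shows "unimodal_circ (gcpc_density w \<gamma> lam)"
  unfolding gcpc_density_eq_comp_cos
proof (rule unimodal_circ_comp_cos_diff, rule strict_mono_onI)
  fix c1 c2 :: real assume "c1 \<in> {-1..1}" "c2 \<in> {-1..1}" "c1 < c2"
  then have "gcpc_denom \<gamma> lam c2 < gcpc_denom \<gamma> lam c1" "0 < gcpc_denom \<gamma> lam c2"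
    using gcpc_denom_strict_decreasing[OF assms] gcpc_denom_pos[of lam c2] assms(2)
    by (auto simp: abs_square_le_1)
  then show "1 / (2 * pi * sqrt lam * gcpc_denom \<gamma> lam c1) < 1 / (2 * pi * sqrt lam * gcpc_denom \<gamma> lam c2)"
    using assms(2) by (intro divide_strict_left_mono) auto
qed

lemma gcpc_b_ge_two_minus_sq:
  assumes "0 < lam" "lam \<le> 1/2" "c\<^sup>2 \<le> 1"
  shows "2 - c\<^sup>2 \<le> gcpc_b lam c"
proof -
  have "2 \<le> 1 / lam" using assms by (simp add: field_simps)
  then have "(1 - c\<^sup>2) * 2 \<le> (1 - c\<^sup>2) * (1 / lam)" using assms(3) by (intro mult_left_mono) auto
  then show ?thesis by (simp add: gcpc_b_def)
qed

lemma gcpc_denom_ge_at_1: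
  assumes "\<gamma> \<ge> 0" "0 < lam" "lam \<le> 1/2" "-1 \<le> c" "c \<le> 1"
  shows "gcpc_denom \<gamma> lam 1 \<le> gcpc_denom \<gamma> lam c"
proof -
  define G where "G = sqrt (\<gamma>\<^sup>2 + 1)"
  define u where "u = sqrt (gcpc_b lam c)"
  have c: "c\<^sup>2 \<le> 1" using assms by (simp add: abs_square_le_1)
  have u: "1 \<le> u" using gcpc_b_ge_two_minus_sq[OF assms(2,3) c] c by (simp add: u_def)
  have G: "\<gamma> \<le> G" using real_sqrt_le_mono[of "\<gamma>\<^sup>2" "\<gamma>\<^sup>2 + 1"] assms(1) by (simp add: G_def)
  have "gcpc_denom \<gamma> lam 1 = G - \<gamma>" by (simp add: gcpc_denom_def gcpc_b_def G_def)
  also have "\<dots> \<le> G * u\<^sup>2 - \<gamma> * u"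
  proof -
    have "0 \<le> G * u" using u G assms(1) by simp
    then have "0 \<le> (u - 1) * (G * (u + 1) - \<gamma>)" using u G by (simp add: distrib_left)
    then show ?thesis by (simp add: algebra_simps power2_eq_square)
  qed
  also have "\<dots> \<le> G * u\<^sup>2 - \<gamma> * c * u"
    using mult_left_mono[of c 1 "\<gamma> * u"] assms u by (simp add: mult_ac)
  also have "\<dots> = gcpc_denom \<gamma> lam c" using gcpc_b_pos[OF assms(2) c] by (simp add: gcpc_denom_def G_def u_def)
  finally show ?thesis .
qed

lemma gcpc_denom_ge_at_minus_1:
  assumes "\<gamma> \<ge> 0" "0 < lam" "lam \<le> 1/2" "-1 \<le> c" "c \<le> 0"
  shows "gcpc_denom \<gamma> lam (-1) \<le> gcpc_denom \<gamma> lam c"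
proof -
  define G where "G = sqrt (\<gamma>\<^sup>2 + 1)"
  define u where "u = sqrt (gcpc_b lam c)"
  have c: "c\<^sup>2 \<le> 1" using assms by (simp add: abs_square_le_1)
  have u_sq: "u\<^sup>2 = gcpc_b lam c" using gcpc_b_pos[OF assms(2) c] by (simp add: u_def)
  have b: "2 - c\<^sup>2 \<le> u\<^sup>2" using gcpc_b_ge_two_minus_sq[OF assms(2,3) c] u_sq by simp
  then have u: "1 \<le> u" using c u_sq by (simp add: u_def)
  have G: "\<gamma> \<le> G" using real_sqrt_le_mono[of "\<gamma>\<^sup>2" "\<gamma>\<^sup>2 + 1"] assms(1) by (simp add: G_def)
  have "gcpc_denom \<gamma> lam (-1) = G + \<gamma>" by (simp add: gcpc_denom_def gcpc_b_def G_def)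
  also have "\<dots> \<le> G * (2 - c\<^sup>2) - \<gamma> * c"
  proof -
    have "G \<le> G * (1 - c)" using G assms by (simp add: right_diff_distrib mult_nonneg_nonpos)
    then have "0 \<le> (1 + c) * (G * (1 - c) - \<gamma>)" using G assms by simp
    then show ?thesis by (simp add: algebra_simps power2_eq_square)
  qed
  also have "\<dots> \<le> G * u\<^sup>2 - \<gamma> * c * u"
  proof -
    have "G * (2 - c\<^sup>2) \<le> G * u\<^sup>2" using b G assms(1) by (simp add: mult_left_mono)
    moreover have "\<gamma> * c * u \<le> \<gamma> * c"
      using mult_left_mono_neg[of 1 u "\<gamma> * c"] mult_nonneg_nonpos[of \<gamma> c] assms u by simp
    ultimately show ?thesis by linarith
  qed
  also have "\<dots> = gcpc_denom \<gamma> lam c" using gcpc_b_pos[OF assms(2) c] by (simp add: gcpc_denom_def G_def u_def)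
  finally show ?thesis .
qed

lemma two_local_maxima_gcpc_density:
  assumes "\<gamma> \<ge> 0" "0 < lam" "lam \<le> 1/2"
  shows "\<exists>x y. x \<in> circ_local_maxima (gcpc_density w \<gamma> lam)
           \<and> y \<in> circ_local_maxima (gcpc_density w \<gamma> lam) \<and> x \<noteq> y"
  unfolding gcpc_density_eq_comp_cos
proof (rule two_circ_local_maxima_comp_cos_diff)
  have inverse_le: "1 / (2 * pi * sqrt lam * gcpc_denom \<gamma> lam c) \<le> 1 / (2 * pi * sqrt lam * gcpc_denom \<gamma> lam c')"
    if "gcpc_denom \<gamma> lam c' \<le> gcpc_denom \<gamma> lam c" "c' = 1 \<or> c' = -1" for c c'
    using that gcpc_denom_pos[of lam c' \<gamma>] assms(2) by (intro divide_left_mono) auto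
  show "1 / (2 * pi * sqrt lam * gcpc_denom \<gamma> lam c) \<le> 1 / (2 * pi * sqrt lam * gcpc_denom \<gamma> lam 1)"
    if "-1 \<le> c" "c \<le> 1" for c
    using inverse_le gcpc_denom_ge_at_1[OF assms that] by blast
  show "1 / (2 * pi * sqrt lam * gcpc_denom \<gamma> lam c) \<le> 1 / (2 * pi * sqrt lam * gcpc_denom \<gamma> lam (-1))"
    if "-1 \<le> c" "c \<le> 0" for c
    using inverse_le gcpc_denom_ge_at_minus_1[OF assms that] by blast
qed

theorem mainTheorem8:
  fixes \<omega> \<gamma> lam :: real
  assumes "\<gamma> > 0" and "lam > 0" and "-pi \<le> \<omega>" and "\<omega> \<le> pi"
  defines "f \<equiv> gcpc_density \<omega> \<gamma> lam"
  shows "(lam = 1 \<longrightarrow> unimodal_circ f)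
       \<and> (1 < lam \<and> lam \<le> \<gamma>\<^sup>2 + 1 \<longrightarrow> unimodal_circ f)
       \<and> (lam > \<gamma>\<^sup>2 + 1 \<and> (\<gamma>\<^sup>2 + 1) * (lam - 1) > (lam - \<gamma>\<^sup>2 - 1) * (2 * lam - 1)\<^sup>2
            \<longrightarrow> unimodal_circ f)
       \<and> (1/2 < lam \<and> lam < 1 \<and> (\<gamma>\<^sup>2 + 1 - lam) * (1 - 2 * lam)\<^sup>2 > (\<gamma>\<^sup>2 + 1) * (1 - lam)
            \<longrightarrow> unimodal_circ f)
       \<and> (lam \<le> 1/2 \<longrightarrow> \<not> unimodal_circ f
            \<and> (\<exists>x y. x \<in> circ_local_maxima f \<and> y \<in> circ_local_maxima f \<and> x \<noteq> y))"
proof -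
  define E where "E = \<gamma>\<^sup>2 + 4 * (lam - 1) * (\<gamma>\<^sup>2 + 1 - lam)"
  have unimodal: "unimodal_circ f" if "lam > 1/2" "lam * E > 0"
    using unimodal_gcpc_density[OF assms(1)] that assms(2) by (simp add: f_def E_def zero_less_mult_iff)
  have E_B: "lam * E = (\<gamma>\<^sup>2 + 1) * (lam - 1) - (lam - \<gamma>\<^sup>2 - 1) * (2 * lam - 1)\<^sup>2"
    and E_C: "lam * E = (\<gamma>\<^sup>2 + 1 - lam) * (1 - 2 * lam)\<^sup>2 - (\<gamma>\<^sup>2 + 1) * (1 - lam)"
    by (simp_all add: E_def algebra_simps power2_eq_square)
  have E_A: "lam * E > 0" if "1 \<le> lam" "lam \<le> \<gamma>\<^sup>2 + 1"
    using that assms(1) by (simp add: E_def add_pos_nonneg)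
  have two_maxima: "\<exists>x y. x \<in> circ_local_maxima f \<and> y \<in> circ_local_maxima f \<and> x \<noteq> y"
    if "lam \<le> 1/2"
    using two_local_maxima_gcpc_density[OF _ assms(2) that] assms(1) by (simp add: f_def)
  show ?thesis
  proof (intro conjI impI)
    show "unimodal_circ f" if "lam = 1" using that E_A by (intro unimodal) auto
    show "unimodal_circ f" if "1 < lam \<and> lam \<le> \<gamma>\<^sup>2 + 1" using that E_A by (intro unimodal) auto
    show "unimodal_circ f"
      if "lam > \<gamma>\<^sup>2 + 1 \<and> (\<gamma>\<^sup>2 + 1) * (lam - 1) > (lam - \<gamma>\<^sup>2 - 1) * (2 * lam - 1)\<^sup>2"
      using that E_B zero_le_power2[of \<gamma>] by (intro unimodal) linarith+
    show "unimodal_circ f"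
      if "1/2 < lam \<and> lam < 1 \<and> (\<gamma>\<^sup>2 + 1 - lam) * (1 - 2 * lam)\<^sup>2 > (\<gamma>\<^sup>2 + 1) * (1 - lam)"
      using that E_C by (intro unimodal) linarith+
    show "\<exists>x y. x \<in> circ_local_maxima f \<and> y \<in> circ_local_maxima f \<and> x \<noteq> y" if "lam \<le> 1/2"
      using two_maxima[OF that] .
    then show "\<not> unimodal_circ f" if "lam \<le> 1/2" using that unfolding unimodal_circ_def by blast
  qed
qed

end
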